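(* Let $\ell$ be a $c$-approximate pseudo-metric ($c\ge1$) and $\mathcal{H}\subseteq\mathcal{Y}^{\mathcal{X}}$ with $\operatorname{diam}(\mathcal{H})\le1$. Suppose there are constants $A\ge1$, $p\ge1$ with $N(\mathcal{H},\varepsilon)\le (A/\varepsilon)^p$ for all $\varepsilon\in(0,1]$. Then $\Phi(\mathcal{H})\le p(\log_2A+1/\ln2)$ and $\mathbb{D}_{\mathrm{onl}}(\mathcal{H})\le 4cp(\log_2A+1/\ln 2)$.
   Context: $c$-approximate pseudo-metric: $\ell(y,y)=0$, symmetry, $\ell(y_1,y_2)\le c(\ell(y_1,y_3)+\ell(y_2,y_3))$. $d_\ell(f,g)=\sup_x\ell(f(x),g(x))$; $\operatorname{diam}(\mathcal{H})=\sup_{f,g\in\mathcal H}d_\ell(f,g)$; $N(U,\varepsilon)$ minimal size of $S\subseteq\mathcal{H}$ with every $u\in U$ within $d_\ell$-distance $\le\varepsilon$ of $S$; $\Phi(U)=\int_0^{\operatorname{diam}(\mathcal{H})}\log_2N(U,\varepsilon)d\varepsilon$. Scaled Littlestone tree of depth $D\le\infty$: internal nodes $u\in\{0,1\}^{<D}$ labeled $x_u\in\mathcal X$, edges labeled $s_{u,0},s_{u,1}\in\mathcal{Y}$, gap $\gamma_u=\ell(s_{u,0},s_{u,1})$; realizable by $\mathcal{H}$ if for every branch $b$ and finite $n\le D$ some $h\in\mathcal{H}$ has $h(x_{b_{\le t}})=s_{b_{\le t},b_{t+1}}$ for $t<n$. $\mathbb{D}_{\mathrm{onl}}(\mathcal{H})=\sup_{\mathcal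 T}\inf_b\sum_t\gamma_{b_{\le t}}$ over realizable trees $\mathcal T$ and their branches $b$. *)

theory Defs
  imports "HOL-Analysis.Analysis"
begin

definition approx_pseudo_metric :: "real \<Rightarrow> ('y \<Rightarrow> 'y \<Rightarrow> real) \<Rightarrow> bool" where
  "approx_pseudo_metric c L \<longleftrightarrow>
     (\<forall>y. L y y = 0) \<and> (\<forall>y1 y2. L y1 y2 = L y2 y1) \<and>
     (\<forall>y1 y2 y3. L y1 y2 \<le> c * (L y1 y3 + L y2 y3))"

definition dist_loss :: "('y \<Rightarrow> 'y \<Rightarrow> real) \<Rightarrow> ('x \<Rightarrow> 'y) \<Rightarrow> ('x \<Rightarrow> 'y) \<Rightarrow> ereal" where
  "dist_loss L f g = (SUP x. ereal (L (f x) (g x)))"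

definition diam_loss :: "('y \<Rightarrow> 'y \<Rightarrow> real) \<Rightarrow> ('x \<Rightarrow> 'y) set \<Rightarrow> ereal" where
  "diam_loss L H = (SUP f\<in>H. SUP g\<in>H. dist_loss L f g)"

definition covnum :: "('y \<Rightarrow> 'y \<Rightarrow> real) \<Rightarrow> ('x \<Rightarrow> 'y) set \<Rightarrow> ('x \<Rightarrow> 'y) set \<Rightarrow> real \<Rightarrow> ereal" where
  "covnum L H U \<epsilon> =
     (INF S\<in>{S. finite S \<and> S \<subseteq> H \<and> (\<forall>u\<in>U. \<exists>s\<in>S. dist_loss L u s \<le> ereal \<epsilon>)}.
        ereal (real (card S)))"

definition log2_ext :: "ereal \<Rightarrow> ennreal" where
  "log2_ext N = (if N = \<infinity> then \<infinity> else ennreal (log 2 (real_of_ereal N)))"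

definition Phi :: "('y \<Rightarrow> 'y \<Rightarrow> real) \<Rightarrow> ('x \<Rightarrow> 'y) set \<Rightarrow> ('x \<Rightarrow> 'y) set \<Rightarrow> ennreal" where
  "Phi L H U = (\<integral>\<^sup>+ \<epsilon>\<in>{\<epsilon>::real. 0 \<le> \<epsilon> \<and> ereal \<epsilon> \<le> diam_loss L H}.
                     log2_ext (covnum L H U \<epsilon>) \<partial>lborel)"

definition pref :: "(nat \<Rightarrow> bool) \<Rightarrow> nat \<Rightarrow> bool list" where
  "pref b t = map b [0..<t]"

text \<open>Scaled Littlestone tree of depth D: nodes are bool lists of length < D,
  x labels the nodes, s u i labels the edge from u to child i.\<close>
definition realizable_tree ::
  "('x \<Rightarrow> 'y) set \<Rightarrow> enat \<Rightarrow> (bool list \<Rightarrow> 'x) \<Rightarrow> (bool list \<Rightarrow> bool \<Rightarrow> 'y) \<Rightarrow> bool" where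
  "realizable_tree H D x s \<longleftrightarrow>
     (\<forall>b::nat \<Rightarrow> bool. \<forall>n::nat. enat n \<le> D \<longrightarrow>
        (\<exists>h\<in>H. \<forall>t<n. h (x (pref b t)) = s (pref b t) (b t)))"

definition branch_value ::
  "('y \<Rightarrow> 'y \<Rightarrow> real) \<Rightarrow> enat \<Rightarrow> (bool list \<Rightarrow> bool \<Rightarrow> 'y) \<Rightarrow> (nat \<Rightarrow> bool) \<Rightarrow> ennreal" where
  "branch_value L D s b =
     (\<Sum>t. if enat t < D then ennreal (L (s (pref b t) False) (s (pref b t) True)) else 0)"

definition D_onl :: "('y \<Rightarrow> 'y \<Rightarrow> real) \<Rightarrow> ('x \<Rightarrow> 'y) set \<Rightarrow> ennreal" where
  "D_onl L H = (SUP T\<in>{(D, x, s). realizable_tree H D x s}.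
                   case T of (D, x, s) \<Rightarrow> (INF b. branch_value L D s b))"

end

theory Submission
  imports Defs
begin

(* Bounding log2 N(H,eps) by p log2 A + p log2 (1/eps) on (0,1] and using that the integral of
   ln (1/eps) over (0,1) is 1 gives the bound on Phi.

   For the online dimension, fix a realizable tree and let V_u be the version space of node u, the
   hypotheses consistent with the labels along the path to u.  At a scale eps < gamma_u / (2c) no
   centre of an eps-cover of V_u can be eps-close to members of both children, by the c-approximate
   triangle inequality at x_u; hence N(V_u0,eps) + N(V_u1,eps) <= N(V_u,eps), and by AM-GM
   log2 N(V_u0,eps) + log2 N(V_u1,eps) + 2 <= 2 log2 N(V_u,eps).  Integrating over eps, the child with
   the smaller Phi satisfies Phi(V_child) + gamma_u / (2c) <= Phi(V_u).  Descending greedily into that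
   child yields a branch whose gaps sum to at most 2c Phi(H). *)

section \<open>Approximate pseudo-metrics and covering numbers\<close>

lemma approx_pseudo_metric_nonneg:
  assumes "approx_pseudo_metric c L" and "0 < c"
  shows "0 \<le> L a b"
proof -
  have "L a a \<le> c * (L a b + L a b)" and "L a a = 0"
    using assms(1) unfolding approx_pseudo_metric_def by blast+
  then show ?thesis
    using assms(2) by (simp add: zero_le_mult_iff)
qed

lemma ereal_le_dist_loss: "ereal (L (f z) (g z)) \<le> dist_loss L f g"
  unfolding dist_loss_def by (rule SUP_upper) simp

lemma dist_loss_le_diam_loss: "f \<in> H \<Longrightarrow> g \<in> H \<Longrightarrow> dist_loss L f g \<le> diam_loss L H"
  unfolding diam_loss_def by (intro SUP_upper2[of f] SUP_upper[of g])

lemma loss_le_of_common_centre: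
  assumes "approx_pseudo_metric c L" and "0 \<le> c"
    and "dist_loss L h0 t \<le> ereal e" and "dist_loss L h1 t \<le> ereal e"
  shows "L (h0 z) (h1 z) \<le> 2 * c * e"
proof -
  have "ereal (L (h0 z) (t z)) \<le> ereal e"
    using ereal_le_dist_loss assms(3) by (rule order_trans)
  moreover have "ereal (L (h1 z) (t z)) \<le> ereal e"
    using ereal_le_dist_loss assms(4) by (rule order_trans)
  ultimately have "c * (L (h0 z) (t z) + L (h1 z) (t z)) \<le> c * (2 * e)"
    using assms(2) by (intro mult_left_mono) auto
  moreover have "L (h0 z) (h1 z) \<le> c * (L (h0 z) (t z) + L (h1 z) (t z))"
    using assms(1) unfolding approx_pseudo_metric_def by blast
  ultimately show ?thesis
    by simp
qed

definition is_cover ::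
  "('y \<Rightarrow> 'y \<Rightarrow> real) \<Rightarrow> ('x \<Rightarrow> 'y) set \<Rightarrow> ('x \<Rightarrow> 'y) set \<Rightarrow> real \<Rightarrow> ('x \<Rightarrow> 'y) set \<Rightarrow> bool"
  where "is_cover L H U e S \<longleftrightarrow> finite S \<and> S \<subseteq> H \<and> (\<forall>u\<in>U. \<exists>s\<in>S. dist_loss L u s \<le> ereal e)"

lemma covnum_is_cover: "covnum L H U e = (INF S\<in>{S. is_cover L H U e S}. ereal (real (card S)))"
  unfolding covnum_def is_cover_def by simp

lemma covnum_le_card: "is_cover L H U e S \<Longrightarrow> covnum L H U e \<le> ereal (real (card S))"
  unfolding covnum_is_cover by (rule INF_lower) simp

lemma covnum_nonneg: "0 \<le> covnum L H U e"
  unfolding covnum_is_cover by (rule INF_greatest) simp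

lemma covnum_ge_1:
  assumes "U \<noteq> {}"
  shows "1 \<le> covnum L H U e"
  unfolding covnum_is_cover
proof (rule INF_greatest)
  fix S assume "S \<in> {S. is_cover L H U e S}"
  then have "finite S" "S \<noteq> {}"
    using assms unfolding is_cover_def by auto
  then show "1 \<le> ereal (real (card S))"
    by (simp add: Suc_leI card_gt_0_iff)
qed

lemma covnum_attained:
  assumes "covnum L H U e \<noteq> \<infinity>"
  obtains S where "is_cover L H U e S" and "covnum L H U e = ereal (real (card S))"
proof -
  have "{S. is_cover L H U e S} \<noteq> {}"
  proof
    assume "{S. is_cover L H U e S} = {}"
    then have "covnum L H U e = top"
      unfolding covnum_is_cover by (simp only: INF_empty)
    with assms show False
      by (simp add: top_ereal_def)
  qed
  then obtain S where S: "is_cover L H U e S" and min: "\<And>S'. is_cover L H U e S' \<Longrightarrow> card S \<le> card S'"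
    using ex_has_least_nat[where m = card] by blast
  have "ereal (real (card S)) \<le> covnum L H U e"
    unfolding covnum_is_cover by (rule INF_greatest) (simp add: min)
  with covnum_le_card[OF S] show ?thesis
    using S that by auto
qed

lemma covnum_mono: "U' \<subseteq> U \<Longrightarrow> covnum L H U' e \<le> covnum L H U e"
  unfolding covnum_is_cover by (rule INF_superset_mono) (auto simp: is_cover_def, blast)

lemma covnum_antimono_scale: "e \<le> e' \<Longrightarrow> covnum L H U e' \<le> covnum L H U e"
  unfolding covnum_is_cover
  by (rule INF_superset_mono) (auto simp: is_cover_def, meson ereal_less_eq(3) order_trans)

lemma log2_ext_ereal [simp]: "log2_ext (ereal r) = ennreal (log 2 r)"
  by (simp add: log2_ext_def)

lemma log2_ext_mono:
  assumes "N \<le> N'" and "0 \<le> N"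
  shows "log2_ext N \<le> log2_ext N'"
proof (cases "N' = \<infinity>")
  case False
  with assms obtain r r' where r: "N = ereal r" "N' = ereal r'" "0 \<le> r" "r \<le> r'"
    by (cases N; cases N') auto
  show ?thesis
  proof (cases "r = 0")
    case False
    with r have "log 2 r \<le> log 2 r'"
      by simp
    with r show ?thesis
      by (simp add: ennreal_leI)
  qed (use r in \<open>simp add: log_def\<close>)
qed (simp add: log2_ext_def)

section \<open>The entropy integral under polynomial covering numbers\<close>

lemma borel_measurable_antimono_ennreal:
  fixes g :: "real \<Rightarrow> ennreal"
  assumes "antimono g"
  shows "g \<in> borel_measurable borel"
proof (rule borel_measurableI_greater)
  fix y
  have "is_interval {x. y < g x}"
    unfolding is_interval_1 using assms by (auto simp: antimono_def intro: less_le_trans)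
  then show "{x \<in> space borel. y < g x} \<in> sets borel"
    by (simp add: real_interval_borel_measurable)
qed

lemma borel_measurable_log2_covnum: "(\<lambda>e. log2_ext (covnum L H U e)) \<in> borel_measurable borel"
  by (intro borel_measurable_antimono_ennreal antimonoI log2_ext_mono covnum_antimono_scale covnum_nonneg)

lemma Phi_integrand_measurable:
  "(\<lambda>e. log2_ext (covnum L H U e) * indicator {e. 0 \<le> e \<and> ereal e \<le> d} e) \<in> borel_measurable lborel"
proof -
  have "is_interval {e. 0 \<le> e \<and> ereal e \<le> d}"
    unfolding is_interval_1 by (auto, meson ereal_less_eq(3) order_trans)
  then have "indicator {e. 0 \<le> e \<and> ereal e \<le> d} \<in> borel_measurable borel"
    by (intro borel_measurable_indicator real_interval_borel_measurable)
  with borel_measurable_log2_covnum[of L H U] show ?thesis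
    by (simp add: measurable_lborel1)
qed

lemma nn_integral_minus_ln_unit_interval: "(\<integral>\<^sup>+ e\<in>{0<..<1}. ennreal (- ln (e::real)) \<partial>lborel) = 1"
proof -
  define F where "F e = e - e * ln e" for e :: real
  have "((\<lambda>e. e * ln e) \<longlongrightarrow> 0) (at_right (0::real))"
    by real_asymp
  then have "((\<lambda>e. e - e * ln e) \<longlongrightarrow> 0 - 0) (at_right (0::real))"
    by (intro tendsto_intros)
  then have F0: "((F \<circ> real_of_ereal) \<longlongrightarrow> 0) (at_right 0)"
    unfolding zero_ereal_def ereal_tendsto_simps F_def by simp
  have F1: "((F \<circ> real_of_ereal) \<longlongrightarrow> 1) (at_left 1)"
    unfolding one_ereal_def ereal_tendsto_simps F_def by (auto intro!: tendsto_eq_intros)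
  have deriv: "DERIV F e :> - ln e" if "0 < ereal e" "ereal e < 1" for e
    using that unfolding F_def by (auto intro!: derivative_eq_intros)
  have cont: "isCont (\<lambda>e. - ln e) e" if "0 < ereal e" "ereal e < 1" for e
    using that by (auto intro!: continuous_intros)
  have nonneg: "AE e in lborel. 0 < ereal e \<longrightarrow> ereal e < 1 \<longrightarrow> 0 \<le> - ln e"
    by auto
  have "(0::ereal) < 1"
    by simp
  from interval_integral_FTC_nonneg[OF this deriv cont nonneg F0 F1]
  have FTC: "set_integrable lborel (einterval 0 1) (\<lambda>e. - ln e)" "(LBINT e=0..1. - ln e) = 1"
    by simp_all
  have unit: "einterval 0 1 = {0<..<1::real}"
    by (metis einterval_eq_Icc zero_ereal_def one_ereal_def)
  have int: "set_integrable lborel {0<..<1} (\<lambda>e::real. - ln e)"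
    using FTC(1) unfolding unit .
  have val: "(LINT e:{0<..<1}|lborel. - ln (e::real)) = 1"
    using FTC(2) unfolding interval_lebesgue_integral_def unit by simp
  have "(\<integral>\<^sup>+ e\<in>{0<..<1}. ennreal (- ln e) \<partial>lborel)
      = (\<integral>\<^sup>+ e. ennreal (indicator {0<..<1} e *\<^sub>R - ln e) \<partial>lborel)"
    by (intro nn_integral_cong) (auto split: split_indicator)
  also have "\<dots> = ennreal (LINT e:{0<..<1}|lborel. - ln e)"
    using int unfolding set_integrable_def set_lebesgue_integral_def
    by (intro nn_integral_eq_integral) (auto split: split_indicator)
  finally show ?thesis
    using val by simp
qed

lemma Phi_le_of_covnum_powr:
  fixes A p :: real
  assumes diam: "diam_loss L H \<le> 1" and A: "1 \<le> A" and p: "0 \<le> p"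
    and cov: "\<And>e. 0 < e \<Longrightarrow> e \<le> 1 \<Longrightarrow> covnum L H H e \<le> ereal ((A / e) powr p)"
  shows "Phi L H H \<le> ennreal (p * (log 2 A + 1 / ln 2))"
proof -
  define a b where "a = p * log 2 A" and "b = p / ln 2"
  have a: "0 \<le> a" and b: "0 \<le> b"
    using A p by (simp_all add: a_def b_def)
  have pointwise: "log2_ext (covnum L H H e) \<le> ennreal a + ennreal b * ennreal (- ln e)"
    if "0 < e" "e < 1" for e
  proof -
    have l: "0 \<le> - ln e"
      using that by simp
    have "log2_ext (covnum L H H e) \<le> log2_ext (ereal ((A / e) powr p))"
      using that by (intro log2_ext_mono cov covnum_nonneg) auto
    also have "\<dots> = ennreal (a + b * (- ln e))"
      using that A by (simp add: a_def b_def log_powr log_def ln_div field_simps)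
    also have "\<dots> = ennreal a + ennreal b * ennreal (- ln e)"
      using ennreal_plus[OF a mult_nonneg_nonneg[OF b l]] by (simp only: ennreal_mult[OF b l])
    finally show ?thesis .
  qed
  have "AE e in lborel. e \<noteq> 0 \<and> e \<noteq> 1"
    using AE_lborel_singleton[of 0] AE_lborel_singleton[of 1] by eventually_elim simp
  then have "Phi L H H \<le> (\<integral>\<^sup>+ e\<in>{0<..<1}. ennreal a + ennreal b * ennreal (- ln e) \<partial>lborel)"
    unfolding Phi_def
  proof (rule nn_integral_mono_AE[OF AE_mp], intro AE_I2 impI)
    fix e :: real assume e: "e \<noteq> 0 \<and> e \<noteq> 1"
    show "log2_ext (covnum L H H e) * indicator {e. 0 \<le> e \<and> ereal e \<le> diam_loss L H} e
        \<le> (ennreal a + ennreal b * ennreal (- ln e)) * indicator {0<..<1} e"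
    proof (cases "0 \<le> e \<and> ereal e \<le> diam_loss L H")
      case True
      then have "0 < e" "e < 1"
        using e diam by (auto dest: order_trans)
      then show ?thesis
        using True pointwise by simp
    qed simp
  qed
  also have "\<dots> = ennreal a * (\<integral>\<^sup>+ e. indicator {0<..<1::real} e \<partial>lborel)
      + ennreal b * (\<integral>\<^sup>+ e\<in>{0<..<1}. ennreal (- ln e) \<partial>lborel)"
    by (subst nn_integral_cmult[symmetric], measurable)+
      (auto simp: distrib_right mult.assoc intro!: nn_integral_add)
  also have "\<dots> = ennreal (a + b)"
    using a b by (simp add: nn_integral_minus_ln_unit_interval ennreal_plus)
  finally show ?thesis
    by (simp add: a_def b_def algebra_simps)
qed

section \<open>Separated subclasses\<close>

lemma is_cover_restrict:
  assumes "is_cover L H U e S" and "U' \<subseteq> U"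
  shows "is_cover L H U' e {t\<in>S. \<exists>h\<in>U'. dist_loss L h t \<le> ereal e}"
  unfolding is_cover_def
proof (intro conjI ballI)
  show "finite {t\<in>S. \<exists>h\<in>U'. dist_loss L h t \<le> ereal e}"
    using assms(1) unfolding is_cover_def by simp
  show "{t\<in>S. \<exists>h\<in>U'. dist_loss L h t \<le> ereal e} \<subseteq> H"
    using assms(1) unfolding is_cover_def by auto
  fix u assume "u \<in> U'"
  then show "\<exists>s\<in>{t\<in>S. \<exists>h\<in>U'. dist_loss L h t \<le> ereal e}. dist_loss L u s \<le> ereal e"
    using assms unfolding is_cover_def by blast
qed

lemma covnum_add_le_of_separated:
  assumes apm: "approx_pseudo_metric c L" and c: "0 \<le> c" and sep: "2 * c * e < L y0 y1"
    and U0: "U0 \<subseteq> U" and U1: "U1 \<subseteq> U"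
    and y0: "\<forall>h\<in>U0. h z = y0" and y1: "\<forall>h\<in>U1. h z = y1"
  shows "covnum L H U0 e + covnum L H U1 e \<le> covnum L H U e"
proof (cases "covnum L H U e = \<infinity>")
  case False
  then obtain S where S: "is_cover L H U e S" and N: "covnum L H U e = ereal (real (card S))"
    by (rule covnum_attained)
  define S0 where "S0 = {t\<in>S. \<exists>h\<in>U0. dist_loss L h t \<le> ereal e}"
  define S1 where "S1 = {t\<in>S. \<exists>h\<in>U1. dist_loss L h t \<le> ereal e}"
  have cov0: "is_cover L H U0 e S0" and cov1: "is_cover L H U1 e S1"
    unfolding S0_def S1_def using S U0 U1 by (simp_all add: is_cover_restrict)
  have "S0 \<inter> S1 = {}"
  proof (rule ccontr)
    assume "S0 \<inter> S1 \<noteq> {}"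
    then obtain t h0 h1 where "h0 \<in> U0" "dist_loss L h0 t \<le> ereal e"
      and "h1 \<in> U1" "dist_loss L h1 t \<le> ereal e"
      unfolding S0_def S1_def by blast
    then have "L y0 y1 \<le> 2 * c * e"
      using loss_le_of_common_centre[OF apm c, of h0 t e h1 z] y0 y1 by simp
    with sep show False
      by simp
  qed
  moreover have "finite S0" "finite S1"
    using cov0 cov1 unfolding is_cover_def by simp_all
  ultimately have "card S0 + card S1 = card (S0 \<union> S1)"
    by (simp add: card_Un_disjoint)
  also have "\<dots> \<le> card S"
    using S unfolding is_cover_def S0_def S1_def by (intro card_mono) auto
  finally have card_le: "card S0 + card S1 \<le> card S" .
  have "covnum L H U0 e + covnum L H U1 e \<le> ereal (real (card S0)) + ereal (real (card S1))"
    by (intro add_mono covnum_le_card cov0 cov1)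
  also have "\<dots> \<le> covnum L H U e"
    using card_le N by simp
  finally show ?thesis .
qed simp

lemma log2_add_log2_add_two_le:
  fixes a b n :: real
  assumes "1 \<le> a" "1 \<le> b" "a + b \<le> n"
  shows "log 2 a + log 2 b + 2 \<le> 2 * log 2 n"
proof -
  have "4 * a * b \<le> (a + b) * (a + b)"
    using sum_squares_ge_zero[of "a - b" 0] by (simp add: algebra_simps power2_eq_square)
  also have "\<dots> \<le> n * n"
    using assms by (intro mult_mono) auto
  finally have *: "4 * a * b \<le> n * n" .
  have "log 2 (4::real) = 2"
    using log_pow_cancel[of "2::real" 2] by simp
  then have "log 2 a + log 2 b + 2 = log 2 (4 * a * b)"
    using assms by (simp add: log_mult)
  also have "\<dots> \<le> log 2 (n * n)"
    using * assms by simp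
  also have "\<dots> = 2 * log 2 n"
    using assms by (simp add: log_mult)
  finally show ?thesis .
qed

lemma log2_ext_add_add_two_le:
  fixes N0 N1 N :: ereal
  assumes "1 \<le> N0" "1 \<le> N1" "N0 + N1 \<le> N"
  shows "log2_ext N0 + log2_ext N1 + 2 \<le> 2 * log2_ext N"
proof (cases "N = \<infinity>")
  case False
  with assms obtain a b n where N: "N0 = ereal a" "N1 = ereal b" "N = ereal n"
    by (cases N0; cases N1; cases N) auto
  with assms have "1 \<le> a" "1 \<le> b" "a + b \<le> n"
    by auto
  then have le: "log 2 a + log 2 b + 2 \<le> 2 * log 2 n"
    by (rule log2_add_log2_add_two_le)
  have "0 \<le> log 2 a" "0 \<le> log 2 b"
    using \<open>1 \<le> a\<close> \<open>1 \<le> b\<close> by simp_all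
  then have "log2_ext N0 + log2_ext N1 + 2 = ennreal (log 2 a + log 2 b + 2)"
    using N by simp
  also have "\<dots> \<le> ennreal (2 * log 2 n)"
    using le by (rule ennreal_leI)
  also have "\<dots> = 2 * log2_ext N"
    using N by (simp add: ennreal_mult')
  finally show ?thesis .
qed (simp add: log2_ext_def ennreal_mult_eq_top_iff)

lemma log2_covnum_children_le:
  assumes apm: "approx_pseudo_metric c L" and c: "0 < c"
    and U0: "U0 \<noteq> {}" "U0 \<subseteq> U" and U1: "U1 \<noteq> {}" "U1 \<subseteq> U"
    and y0: "\<forall>h\<in>U0. h z = y0" and y1: "\<forall>h\<in>U1. h z = y1"
  shows "log2_ext (covnum L H U0 e) + log2_ext (covnum L H U1 e) + 2 * indicator {..<L y0 y1 / (2 * c)} e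
    \<le> 2 * log2_ext (covnum L H U e)"
proof (cases "e < L y0 y1 / (2 * c)")
  case True
  then have "2 * c * e < L y0 y1"
    using c by (simp add: field_simps)
  then have "covnum L H U0 e + covnum L H U1 e \<le> covnum L H U e"
    using c by (intro covnum_add_le_of_separated[OF apm _ _ U0(2) U1(2) y0 y1]) auto
  with covnum_ge_1[OF U0(1)] covnum_ge_1[OF U1(1)] show ?thesis
    using True by (simp add: log2_ext_add_add_two_le)
next
  case False
  have "log2_ext (covnum L H U0 e) + log2_ext (covnum L H U1 e)
      \<le> log2_ext (covnum L H U e) + log2_ext (covnum L H U e)"
    by (intro add_mono log2_ext_mono covnum_mono covnum_nonneg U0(2) U1(2))
  moreover have "indicator {..<L y0 y1 / (2 * c)} e = (0::ennreal)"
    using False by simp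
  ultimately show ?thesis
    by (simp only: mult_2 mult_zero_right add_0_right)
qed

lemma Phi_children_sum_le:
  assumes apm: "approx_pseudo_metric c L" and c: "1 \<le> c"
    and U0: "U0 \<noteq> {}" "U0 \<subseteq> U" and U1: "U1 \<noteq> {}" "U1 \<subseteq> U" and UH: "U \<subseteq> H"
    and y0: "\<forall>h\<in>U0. h z = y0" and y1: "\<forall>h\<in>U1. h z = y1"
  shows "Phi L H U0 + Phi L H U1 + 2 * ennreal (L y0 y1 / (2 * c)) \<le> 2 * Phi L H U"
proof -
  define a where "a = L y0 y1 / (2 * c)"
  define R where "R = {e. 0 \<le> e \<and> ereal e \<le> diam_loss L H}"
  define g where "g V e = log2_ext (covnum L H V e) * indicator R e" for V e
  have Phi_g: "Phi L H V = integral\<^sup>N lborel (g V)" for V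
    unfolding Phi_def g_def R_def ..
  have g_measurable: "g V \<in> borel_measurable lborel" for V
    unfolding g_def R_def by (rule Phi_integrand_measurable)
  have L_nonneg: "0 \<le> L y0 y1"
    using apm c by (intro approx_pseudo_metric_nonneg) auto
  moreover have "1 * L y0 y1 \<le> (2 * c) * L y0 y1"
    using c L_nonneg by (intro mult_right_mono) auto
  ultimately have a: "0 \<le> a" "a \<le> L y0 y1"
    using c by (auto simp: a_def divide_le_eq mult.commute)
  obtain h0 h1 where "h0 \<in> U0" "h1 \<in> U1"
    using U0 U1 by blast
  then have "ereal (L y0 y1) \<le> diam_loss L H"
    using ereal_le_dist_loss[of L h0 z h1] dist_loss_le_diam_loss[of h0 H h1 L] y0 y1 U0 U1 UH
    by (metis subsetD order_trans)
  with a have "{0..<a} \<subseteq> R"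
    unfolding R_def by (auto, meson ereal_less_eq(3) order_trans less_imp_le)
  then have pointwise: "g U0 e + g U1 e + 2 * indicator {0..<a} e \<le> 2 * g U e" for e
    using log2_covnum_children_le[OF apm _ U0 U1 y0 y1, of H e] c
    by (cases "e \<in> R") (auto simp: g_def a_def R_def indicator_def)
  have "Phi L H U0 + Phi L H U1 + 2 * ennreal a
      = integral\<^sup>N lborel (\<lambda>e. g U0 e + g U1 e + 2 * indicator {0..<a} e)"
    using g_measurable a
    by (simp add: Phi_g nn_integral_add nn_integral_cmult_indicator)
  also have "\<dots> \<le> integral\<^sup>N lborel (\<lambda>e. 2 * g U e)"
    by (intro nn_integral_mono pointwise)
  also have "\<dots> = 2 * Phi L H U"
    unfolding Phi_g using g_measurable by (intro nn_integral_cmult) auto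
  finally show ?thesis
    unfolding a_def .
qed

lemma Phi_min_child_le:
  assumes "approx_pseudo_metric c L" and "1 \<le> c"
    and "U0 \<noteq> {}" "U0 \<subseteq> U" and "U1 \<noteq> {}" "U1 \<subseteq> U" and "U \<subseteq> H"
    and "\<forall>h\<in>U0. h z = y0" and "\<forall>h\<in>U1. h z = y1"
  shows "min (Phi L H U0) (Phi L H U1) + ennreal (L y0 y1 / (2 * c)) \<le> Phi L H U"
proof -
  have "2 * min (Phi L H U0) (Phi L H U1) \<le> Phi L H U0 + Phi L H U1"
    by (simp add: mult_2 add_mono)
  with Phi_children_sum_le[OF assms]
  have "2 * (min (Phi L H U0) (Phi L H U1) + ennreal (L y0 y1 / (2 * c))) \<le> 2 * Phi L H U"
    unfolding distrib_left by (meson add_right_mono order_trans)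
  then show ?thesis
    by (subst (asm) ennreal_mult_le_mult_iff) auto
qed

section \<open>Scaled Littlestone trees\<close>

definition version_space ::
  "('x \<Rightarrow> 'y) set \<Rightarrow> (bool list \<Rightarrow> 'x) \<Rightarrow> (bool list \<Rightarrow> bool \<Rightarrow> 'y) \<Rightarrow> bool list \<Rightarrow> ('x \<Rightarrow> 'y) set"
  where "version_space H x s u = {h\<in>H. \<forall>t<length u. h (x (take t u)) = s (take t u) (u ! t)}"

lemma version_space_Nil [simp]: "version_space H x s [] = H"
  unfolding version_space_def by simp

lemma version_space_subset: "version_space H x s u \<subseteq> H"
  unfolding version_space_def by auto

lemma version_space_snoc_subset: "version_space H x s (u @ [i]) \<subseteq> version_space H x s u"
  unfolding version_space_def by (auto simp: nth_append)

lemma version_space_snoc_value: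
  assumes "h \<in> version_space H x s (u @ [i])"
  shows "h (x u) = s u i"
proof -
  have "\<forall>t<length (u @ [i]). h (x (take t (u @ [i]))) = s (take t (u @ [i])) ((u @ [i]) ! t)"
    using assms unfolding version_space_def by blast
  then show ?thesis
    by (auto dest: spec[of _ "length u"])
qed

lemma pref_Suc: "pref b (Suc n) = pref b n @ [b n]"
  unfolding pref_def by simp

lemma version_space_nonempty:
  assumes "realizable_tree H D x s" and "enat (length u) \<le> D"
  shows "version_space H x s u \<noteq> {}"
proof -
  define b where "b t = (if t < length u then u ! t else False)" for t
  have pref_b: "pref b t = take t u" if "t \<le> length u" for t
    using that by (simp add: pref_def b_def list_eq_iff_nth_eq)
  obtain h where "h \<in> H" "\<forall>t<length u. h (x (pref b t)) = s (pref b t) (b t)"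
    using assms unfolding realizable_tree_def by blast
  then have "h \<in> version_space H x s u"
    unfolding version_space_def by (simp add: pref_b b_def)
  then show ?thesis
    by blast
qed

lemma greedy_branch_sum_le:
  fixes \<Psi> \<gamma> :: "bool list \<Rightarrow> ennreal"
  assumes descent: "\<And>u. enat (length u) < D \<Longrightarrow> min (\<Psi> (u @ [False])) (\<Psi> (u @ [True])) + \<gamma> u \<le> \<Psi> u"
  obtains b where "\<And>n. enat n \<le> D \<Longrightarrow> (\<Sum>t<n. \<gamma> (pref b t)) \<le> \<Psi> []"
proof -
  define child where "child u = (\<Psi> (u @ [True]) < \<Psi> (u @ [False]))" for u
  define path where "path = rec_nat [] (\<lambda>_ u. u @ [child u])"
  have path_0: "path 0 = []" and path_Suc: "path (Suc n) = path n @ [child (path n)]" for n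
    by (simp_all add: path_def)
  define b where "b t = child (path t)" for t
  have pref_b: "pref b n = path n" for n
    by (induction n) (simp_all add: pref_def path_0 path_Suc b_def)
  have step: "\<Psi> (pref b (Suc n)) + \<gamma> (pref b n) \<le> \<Psi> (pref b n)" if "enat n < D" for n
  proof -
    have "\<Psi> (pref b (Suc n)) = min (\<Psi> (path n @ [False])) (\<Psi> (path n @ [True]))"
      unfolding pref_b path_Suc child_def
      by (cases "\<Psi> (path n @ [True]) < \<Psi> (path n @ [False])") (auto simp: min_def)
    moreover have "length (path n) = n"
      unfolding pref_b[symmetric] by (simp add: pref_def)
    ultimately show ?thesis
      using descent[of "path n"] that by (simp add: pref_b)
  qed
  have bound: "\<Psi> (pref b n) + (\<Sum>t<n. \<gamma> (pref b t)) \<le> \<Psi> []" if "enat n \<le> D" for n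
    using that
  proof (induction n)
    case 0
    then show ?case
      by (simp add: pref_def)
  next
    case (Suc n)
    then have n: "enat n < D"
      by (simp add: Suc_ile_eq)
    have "\<Psi> (pref b (Suc n)) + (\<Sum>t<Suc n. \<gamma> (pref b t))
        = (\<Psi> (pref b (Suc n)) + \<gamma> (pref b n)) + (\<Sum>t<n. \<gamma> (pref b t))"
      by (simp only: sum.lessThan_Suc ac_simps)
    also have "\<dots> \<le> \<Psi> (pref b n) + (\<Sum>t<n. \<gamma> (pref b t))"
      using step[OF n] by (rule add_right_mono)
    also have "\<dots> \<le> \<Psi> []"
      using Suc.IH n by simp
    finally show ?case .
  qed
  show ?thesis
  proof (rule that)
    fix n assume "enat n \<le> D"
    show "(\<Sum>t<n. \<gamma> (pref b t)) \<le> \<Psi> []"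
      using add_increasing[OF zero_le order_refl] bound[OF \<open>enat n \<le> D\<close>] by (rule order_trans)
  qed
qed

lemma branch_value_le:
  assumes "\<And>n. enat n \<le> D \<Longrightarrow> (\<Sum>t<n. ennreal (L (s (pref b t) False) (s (pref b t) True))) \<le> K"
  shows "branch_value L D s b \<le> K"
  unfolding branch_value_def
proof (rule suminf_le_const[OF summableI])
  fix n
  obtain m where m: "enat m \<le> D" "{t. t < n \<and> enat t < D} = {..<m}"
  proof (cases D)
    case (enat k)
    then have "{t. t < n \<and> enat t < D} = {..<min n k}"
      by auto
    with enat show ?thesis
      using that[of "min n k"] by simp
  qed (use that[of n] in auto)
  have "(\<Sum>t<n. if enat t < D then ennreal (L (s (pref b t) False) (s (pref b t) True)) else 0)
      = (\<Sum>t<m. ennreal (L (s (pref b t) False) (s (pref b t) True)))"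
    by (simp add: sum.inter_filter[symmetric] m(2))
  also have "\<dots> \<le> K"
    using m(1) by (rule assms)
  finally show "(\<Sum>t<n. if enat t < D then ennreal (L (s (pref b t) False) (s (pref b t) True)) else 0) \<le> K" .
qed

lemma realizable_tree_branch_value_le:
  assumes apm: "approx_pseudo_metric c L" and c: "1 \<le> c" and tree: "realizable_tree H D x s"
  shows "\<exists>b. branch_value L D s b \<le> ennreal (2 * c) * Phi L H H"
proof -
  define V where "V = version_space H x s"
  define \<gamma> where "\<gamma> u = L (s u False) (s u True)" for u
  have descent: "min (Phi L H (V (u @ [False]))) (Phi L H (V (u @ [True]))) + ennreal (\<gamma> u / (2 * c))
      \<le> Phi L H (V u)" if "enat (length u) < D" for u
    unfolding V_def \<gamma>_def
  proof (rule Phi_min_child_le[OF apm c, where z = "x u"])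
    have "enat (length (u @ [i])) \<le> D" for i
      using that by (simp add: Suc_ile_eq)
    then show "version_space H x s (u @ [False]) \<noteq> {}" "version_space H x s (u @ [True]) \<noteq> {}"
      using version_space_nonempty[OF tree] by blast+
  qed (auto simp: version_space_snoc_subset version_space_subset dest: version_space_snoc_value)
  obtain b where "\<And>n. enat n \<le> D \<Longrightarrow> (\<Sum>t<n. ennreal (\<gamma> (pref b t) / (2 * c))) \<le> Phi L H (V [])"
    using greedy_branch_sum_le[where \<Psi> = "\<lambda>u. Phi L H (V u)" and \<gamma> = "\<lambda>u. ennreal (\<gamma> u / (2 * c))",
        OF descent] by blast
  then have b: "\<And>n. enat n \<le> D \<Longrightarrow> (\<Sum>t<n. ennreal (\<gamma> (pref b t) / (2 * c))) \<le> Phi L H H"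
    by (simp add: V_def)
  have rescale: "ennreal (2 * c) * ennreal (r / (2 * c)) = ennreal r" for r
    using ennreal_mult'[of "2 * c" "r / (2 * c)"] c by simp
  have "branch_value L D s b \<le> ennreal (2 * c) * Phi L H H"
  proof (rule branch_value_le)
    fix n assume "enat n \<le> D"
    have "(\<Sum>t<n. ennreal (\<gamma> (pref b t))) = ennreal (2 * c) * (\<Sum>t<n. ennreal (\<gamma> (pref b t) / (2 * c)))"
      by (simp add: sum_distrib_left rescale)
    also have "\<dots> \<le> ennreal (2 * c) * Phi L H H"
      using b[OF \<open>enat n \<le> D\<close>] by (rule mult_left_mono) simp
    finally show "(\<Sum>t<n. ennreal (L (s (pref b t) False) (s (pref b t) True))) \<le> ennreal (2 * c) * Phi L H H"
      unfolding \<gamma>_def .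
  qed
  then show ?thesis
    by blast
qed

lemma D_onl_le_Phi:
  assumes "approx_pseudo_metric c L" and "1 \<le> c"
  shows "D_onl L H \<le> ennreal (2 * c) * Phi L H H"
  unfolding D_onl_def
proof (rule SUP_least, clarsimp)
  fix D x s assume "realizable_tree H D x s"
  then obtain b where "branch_value L D s b \<le> ennreal (2 * c) * Phi L H H"
    using realizable_tree_branch_value_le[OF assms] by blast
  then show "(INF b. branch_value L D s b) \<le> ennreal (2 * c) * Phi L H H"
    by (rule order_trans[OF INF_lower[where f = "branch_value L D s", OF UNIV_I]])
qed

theorem corollary1p2:
  fixes L :: "'y \<Rightarrow> 'y \<Rightarrow> real" and H :: "('x \<Rightarrow> 'y) set" and c A p :: real
  assumes "c \<ge> 1" and "approx_pseudo_metric c L"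
    and "diam_loss L H \<le> 1"
    and "A \<ge> 1" and "p \<ge> 1"
    and "\<And>\<epsilon>. 0 < \<epsilon> \<Longrightarrow> \<epsilon> \<le> 1 \<Longrightarrow> covnum L H H \<epsilon> \<le> ereal ((A / \<epsilon>) powr p)"
  shows "Phi L H H \<le> ennreal (p * (log 2 A + 1 / ln 2)) \<and>
           D_onl L H \<le> ennreal (4 * c * p * (log 2 A + 1 / ln 2))"
proof
  define K where "K = p * (log 2 A + 1 / ln 2)"
  have K: "0 \<le> K"
    using assms(4,5) by (simp add: K_def)
  show Phi: "Phi L H H \<le> ennreal K"
    unfolding K_def using assms(3-6) by (intro Phi_le_of_covnum_powr) auto
  have "D_onl L H \<le> ennreal (2 * c) * Phi L H H"
    by (rule D_onl_le_Phi[OF assms(2,1)])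
  also have "\<dots> \<le> ennreal (2 * c) * ennreal K"
    using Phi by (rule mult_left_mono) simp
  also have "\<dots> = ennreal (2 * c * K)"
    using assms(1) by (simp add: ennreal_mult')
  also have "\<dots> \<le> ennreal (4 * c * K)"
    using assms(1) K by (intro ennreal_leI mult_right_mono) auto
  finally show "D_onl L H \<le> ennreal (4 * c * p * (log 2 A + 1 / ln 2))"
    by (simp add: K_def mult.assoc)
qed

end
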